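(* For every Frankenstein graph $\mathfrak F$ (with its given partition $\{\mathsf G_1,\dots,\mathsf G_m\}$), the auxiliary bipartite graph $G(\mathfrak F)$ is acyclic, i.e. it is a forest.
   Context: A (colored) graph is a finite set $\mathsf G$ of pairs $(e,\alpha)$, where the $e$'s are pairwise distinct 2-element subsets of a vertex set and $\alpha$ is a color (colors may repeat). $V(\mathsf G)$ is its vertex set and $\chi(\mathsf G)$ its set of colors; $\mathsf G$ is rainbow if $|\chi(\mathsf G)|=|\mathsf G|$ and almost rainbow if $|\chi(\mathsf G)|=|\mathsf G|-1$. A subgraph is a subset. Paths, cycles, trees are colored graphs whose underlying uncolored edges form a path (two distinct terminals), cycle, or tree; lengths count edges. A long rainbow odd cycle is a rainbow cycle of odd length at least $7$. A theta graph is a union $\mathsf P_1\cup\mathsf P_2\cup\mathsf P_3$ of three paths with the same terminals $s\neq t$ such that any two share no vertex other than $s,t$ and no underlying uncolored edge. A bad piece is an almost rainbow theta graph with at least $6$ vertices that is the union of three rainbow paths as in the definition of a theta graph. A partition of a graph $\mathsf G$ is a collection $\{\mathsf G_1,\dots,\mathsf G_m\}$ of graphs with $\mathsf G=\bigcup_i\mathsf G_i$ and, for $i\ne j$, $|V(\mathsf G_i)\cap V(\mathsf G_j)|\le 1$ and $\chi(\mathsf G_i)\cap\chi(\mathsf G_j)=\emptyset$; its members are called parts. A Frankenstein graph is a graph $\mathfrak F$ together with a partition $\{\mathsf C_1,\dots,\mathsf C_c,\mathsf B_1,\dots,\mathsf B_b,\mathsf T_1,\dots,\mathsf T_t\}$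 ($c,b,t\ge0$, $c+b+t\ge1$) in which the $\mathsf C_i$ are long rainbow odd cycles, the $\mathsf B_i$ are bad pieces and the $\mathsf T_i$ are rainbow trees, such that (F1) $V(\mathsf T_p)\cap V(\mathsf T_q)=\emptyset$ for $p\neq q$, and (F2) no subgraph of $\mathfrak F$ is a rainbow even cycle. The auxiliary graph $G(\mathfrak F)$ is the uncolored bipartite graph with parts $V_1=\{\mathsf G_1,\dots,\mathsf G_m\}$ and $V_2=$ the set of vertices $v$ that are the common vertex of two distinct parts $\mathsf G_i,\mathsf G_j$, with an edge between $\mathsf G\in V_1$ and $v\in V_2$ iff $v\in V(\mathsf G)$. *)

theory Defs
  imports Main
begin

definition upath_edges :: "'v list \<Rightarrow> 'v set set" where
  "upath_edges vs = {{vs ! i, vs ! Suc i} | i. Suc i < length vs}"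

definition is_upath :: "'v set set \<Rightarrow> 'v \<Rightarrow> 'v \<Rightarrow> bool" where
  "is_upath E s t \<longleftrightarrow> (\<exists>vs. distinct vs \<and> length vs \<ge> 2 \<and> hd vs = s \<and> last vs = t
      \<and> E = upath_edges vs)"

definition is_ucycle :: "'v set set \<Rightarrow> bool" where
  "is_ucycle E \<longleftrightarrow> (\<exists>vs. distinct vs \<and> length vs \<ge> 3
      \<and> E = {{vs ! i, vs ! ((Suc i) mod length vs)} | i. i < length vs})"

definition uadj :: "'v set set \<Rightarrow> ('v \<times> 'v) set" where
  "uadj E = {(x, y). {x, y} \<in> E}"

definition uconnected :: "'v set set \<Rightarrow> bool" where
  "uconnected E \<longleftrightarrow> (\<forall>u\<in>\<Union>E. \<forall>v\<in>\<Union>E. (u, v) \<in> (uadj E)\<^sup>*)"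

definition uforest :: "'v set set \<Rightarrow> bool" where
  "uforest E \<longleftrightarrow> \<not> (\<exists>C \<subseteq> E. is_ucycle C)"

definition is_utree :: "'v set set \<Rightarrow> bool" where
  "is_utree E \<longleftrightarrow> E \<noteq> {} \<and> uconnected E \<and> uforest E"

type_synonym ('v, 'c) cgraph = "('v set \<times> 'c) set"

definition cgraph :: "('v, 'c) cgraph \<Rightarrow> bool" where
  "cgraph G \<longleftrightarrow> finite G \<and> (\<forall>p\<in>G. card (fst p) = 2)
      \<and> (\<forall>p\<in>G. \<forall>q\<in>G. fst p = fst q \<longrightarrow> p = q)"

definition verts :: "('v, 'c) cgraph \<Rightarrow> 'v set" where
  "verts G = \<Union> (fst ` G)"

definition colors :: "('v, 'c) cgraph \<Rightarrow> 'c set" where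
  "colors G = snd ` G"

definition rainbow :: "('v, 'c) cgraph \<Rightarrow> bool" where
  "rainbow G \<longleftrightarrow> card (colors G) = card G"

definition almost_rainbow :: "('v, 'c) cgraph \<Rightarrow> bool" where
  "almost_rainbow G \<longleftrightarrow> card (colors G) + 1 = card G"

definition cpath :: "('v, 'c) cgraph \<Rightarrow> 'v \<Rightarrow> 'v \<Rightarrow> bool" where
  "cpath G s t \<longleftrightarrow> cgraph G \<and> is_upath (fst ` G) s t"

definition ccycle :: "('v, 'c) cgraph \<Rightarrow> bool" where
  "ccycle G \<longleftrightarrow> cgraph G \<and> is_ucycle (fst ` G)"

definition ctree :: "('v, 'c) cgraph \<Rightarrow> bool" where
  "ctree G \<longleftrightarrow> cgraph G \<and> is_utree (fst ` G)"

text \<open>Length of paths/cycles = number of edges = card G.\<close>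
definition long_rainbow_odd_cycle :: "('v, 'c) cgraph \<Rightarrow> bool" where
  "long_rainbow_odd_cycle G \<longleftrightarrow> ccycle G \<and> rainbow G \<and> odd (card G) \<and> card G \<ge> 7"

definition rainbow_tree :: "('v, 'c) cgraph \<Rightarrow> bool" where
  "rainbow_tree G \<longleftrightarrow> ctree G \<and> rainbow G"

definition theta_paths ::
  "('v, 'c) cgraph \<Rightarrow> ('v, 'c) cgraph \<Rightarrow> ('v, 'c) cgraph \<Rightarrow> 'v \<Rightarrow> 'v \<Rightarrow> bool" where
  "theta_paths P1 P2 P3 s t \<longleftrightarrow> s \<noteq> t \<and> cpath P1 s t \<and> cpath P2 s t \<and> cpath P3 s t
     \<and> verts P1 \<inter> verts P2 \<subseteq> {s, t} \<and> verts P1 \<inter> verts P3 \<subseteq> {s, t}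
     \<and> verts P2 \<inter> verts P3 \<subseteq> {s, t}
     \<and> fst ` P1 \<inter> fst ` P2 = {} \<and> fst ` P1 \<inter> fst ` P3 = {} \<and> fst ` P2 \<inter> fst ` P3 = {}"

definition theta_graph :: "('v, 'c) cgraph \<Rightarrow> bool" where
  "theta_graph G \<longleftrightarrow> cgraph G \<and>
     (\<exists>P1 P2 P3 s t. theta_paths P1 P2 P3 s t \<and> G = P1 \<union> P2 \<union> P3)"

definition bad_piece :: "('v, 'c) cgraph \<Rightarrow> bool" where
  "bad_piece G \<longleftrightarrow> theta_graph G \<and> almost_rainbow G \<and> card (verts G) \<ge> 6 \<and>
     (\<exists>P1 P2 P3 s t. theta_paths P1 P2 P3 s t \<and> rainbow P1 \<and> rainbow P2 \<and> rainbow P3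
        \<and> G = P1 \<union> P2 \<union> P3)"

definition is_partition :: "('v, 'c) cgraph \<Rightarrow> ('v, 'c) cgraph set \<Rightarrow> bool" where
  "is_partition F Ps \<longleftrightarrow> finite Ps \<and> (\<forall>G\<in>Ps. cgraph G) \<and> F = \<Union> Ps \<and>
     (\<forall>Gi\<in>Ps. \<forall>Gj\<in>Ps. Gi \<noteq> Gj \<longrightarrow>
        card (verts Gi \<inter> verts Gj) \<le> 1 \<and> colors Gi \<inter> colors Gj = {})"

definition frankenstein :: "('v, 'c) cgraph \<Rightarrow> ('v, 'c) cgraph set \<Rightarrow> bool" where
  "frankenstein F Ps \<longleftrightarrow> cgraph F \<and> is_partition F Ps \<and> Ps \<noteq> {} \<and>
     (\<forall>G\<in>Ps. long_rainbow_odd_cycle G \<or> bad_piece G \<or> rainbow_tree G) \<and>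
     (\<forall>Tp\<in>Ps. \<forall>Tq\<in>Ps. Tp \<noteq> Tq \<and> rainbow_tree Tp \<and> rainbow_tree Tq
        \<longrightarrow> verts Tp \<inter> verts Tq = {}) \<and>
     \<not> (\<exists>C \<subseteq> F. ccycle C \<and> rainbow C \<and> even (card C))"

definition shared_verts :: "('v, 'c) cgraph set \<Rightarrow> 'v set" where
  "shared_verts Ps = {v. \<exists>Gi\<in>Ps. \<exists>Gj\<in>Ps. Gi \<noteq> Gj \<and> v \<in> verts Gi \<and> v \<in> verts Gj}"

definition aux_graph :: "('v, 'c) cgraph set \<Rightarrow> (('v, 'c) cgraph + 'v) set set" where
  "aux_graph Ps = {{Inl G, Inr v} | G v. G \<in> Ps \<and> v \<in> shared_verts Ps \<and> v \<in> verts G}"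

end

theory Submission
  imports Defs
begin

text \<open>
  A cycle in the auxiliary graph is a cyclic sequence of distinct parts in which consecutive
  parts share a vertex. Take a shortest one: it has at least three parts, and non-consecutive
  parts are vertex-disjoint. In each part, the two vertices it shares with its neighbours are
  joined by a rainbow path. Since every rainbow cycle of F is odd, long rainbow odd cycles and
  bad pieces contain such paths of both parities, and of two consecutive parts at least one is
  not a tree. Concatenating the paths therefore yields a cycle of F which is rainbow (distinct
  parts have disjoint colours) and can be chosen of even length, contradicting (F2).
\<close>

section \<open>Paths and cycles as vertex lists\<close>

lemma upath_edges_Nil [simp]: "upath_edges [] = {}"
  by (simp add: upath_edges_def)

lemma upath_edges_singleton [simp]: "upath_edges [x] = {}"
  by (simp add: upath_edges_def)

lemma upath_edges_Cons_Cons [simp]: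
  "upath_edges (x # y # xs) = insert {x, y} (upath_edges (y # xs))"
proof -
  have "{i. Suc i < length (x # y # xs)} = insert 0 (Suc ` {i. Suc i < length (y # xs)})"
    by (auto simp: image_iff) (metis less_Suc_eq_0_disj)
  then show ?thesis
    unfolding upath_edges_def by (auto simp: setcompr_eq_image image_image)
qed

lemma upath_edges_Cons:
  "xs \<noteq> [] \<Longrightarrow> upath_edges (x # xs) = insert {x, hd xs} (upath_edges xs)"
  by (cases xs) auto

lemma upath_edges_append:
  "xs \<noteq> [] \<Longrightarrow> ys \<noteq> [] \<Longrightarrow>
    upath_edges (xs @ ys) = insert {last xs, hd ys} (upath_edges xs \<union> upath_edges ys)"
  by (induction xs rule: induct_list012) (auto simp: upath_edges_Cons)

lemma upath_edges_append_tl: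
  assumes "xs \<noteq> []" "ys \<noteq> []" "last xs = hd ys"
  shows "upath_edges (xs @ tl ys) = upath_edges xs \<union> upath_edges ys"
proof (cases "tl ys")
  case Nil
  then show ?thesis using assms(2) by (cases ys) auto
next
  case (Cons z zs)
  then have "ys = hd ys # z # zs" using assms(2) by (cases ys) auto
  then show ?thesis using assms upath_edges_append[of xs "tl ys"] Cons
    by (metis Un_insert_right list.sel(1) list.distinct(1) upath_edges_Cons_Cons)
qed

lemma upath_edges_rev [simp]: "upath_edges (rev xs) = upath_edges xs"
proof (induction xs rule: induct_list012)
  case (3 x y zs)
  then show ?case
    using upath_edges_append[of "rev zs @ [y]" "[x]"] by (auto simp: insert_commute)
qed simp_all

lemma Union_upath_edges: "2 \<le> length xs \<Longrightarrow> \<Union> (upath_edges xs) = set xs"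
proof (induction xs rule: induct_list012)
  case (3 x y zs)
  then show ?case by (cases zs) auto
qed simp_all

lemma upath_edges_subset_set: "e \<in> upath_edges xs \<Longrightarrow> e \<subseteq> set xs"
  unfolding upath_edges_def by auto

lemma upath_edges_disjoint:
  assumes "distinct xs" "set xs \<inter> set ys \<subseteq> {z}"
  shows "upath_edges xs \<inter> upath_edges ys = {}"
proof (rule ccontr)
  assume "upath_edges xs \<inter> upath_edges ys \<noteq> {}"
  then obtain i where i: "Suc i < length xs" "{xs ! i, xs ! Suc i} \<in> upath_edges ys"
    unfolding upath_edges_def by blast
  then have "xs ! i \<noteq> xs ! Suc i" using assms(1) by (simp add: nth_eq_iff_index_eq)
  moreover have "{xs ! i, xs ! Suc i} \<subseteq> set xs \<inter> set ys"
    using i upath_edges_subset_set[OF i(2)] by auto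
  ultimately show False using assms(2) by blast
qed

lemma upath_edges_take: "upath_edges (take n xs) \<subseteq> upath_edges xs"
  using upath_edges_append[of "take n xs" "drop n xs"] by (cases "take n xs = [] \<or> drop n xs = []") auto

lemma upath_edges_drop: "upath_edges (drop n xs) \<subseteq> upath_edges xs"
  using upath_edges_append[of "take n xs" "drop n xs"] by (cases "take n xs = [] \<or> drop n xs = []") auto

lemma finite_upath_edges [simp]: "finite (upath_edges xs)"
proof -
  have "upath_edges xs = (\<lambda>i. {xs ! i, xs ! Suc i}) ` {..<length xs - 1}"
    unfolding upath_edges_def by auto
  then show ?thesis by simp
qed

lemma card_upath_edges: "distinct xs \<Longrightarrow> card (upath_edges xs) = length xs - 1"
proof (induction xs rule: induct_list012)
  case (3 x y zs)
  then have "{x, y} \<notin> upath_edges (y # zs)"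
    using upath_edges_subset_set[of "{x, y}" "y # zs"] by auto
  then show ?case using 3 by simp
qed simp_all

definition list_path :: "'v list \<Rightarrow> 'v \<Rightarrow> 'v \<Rightarrow> bool" where
  "list_path p x y \<longleftrightarrow> distinct p \<and> 2 \<le> length p \<and> hd p = x \<and> last p = y"

lemma is_upath_iff_list_path: "is_upath E s t \<longleftrightarrow> (\<exists>p. list_path p s t \<and> E = upath_edges p)"
  unfolding is_upath_def list_path_def by blast

lemma list_path_rev: "list_path p x y \<Longrightarrow> list_path (rev p) y x"
  unfolding list_path_def by (auto simp: hd_rev last_rev)

lemma list_pathE:
  assumes "list_path p x y"
  obtains q where "p = x # q" "q \<noteq> []" "x \<notin> set q" "last q = y" "distinct q"
  using assms unfolding list_path_def by (cases p) (auto simp: Suc_le_length_iff)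

lemma list_path_endpoints_in_set: "list_path p x y \<Longrightarrow> x \<in> set p \<and> y \<in> set p"
  by (metis list_pathE last_in_set list.set_intros)

lemma Union_upath_edges_list_path: "list_path p x y \<Longrightarrow> \<Union> (upath_edges p) = set p"
  unfolding list_path_def by (simp add: Union_upath_edges)

lemma list_path_append_tl:
  assumes p: "list_path p x y" and q: "list_path q y z" and pq: "set p \<inter> set q \<subseteq> {y}"
    and "x \<noteq> z"
  shows "list_path (p @ tl q) x z" "upath_edges (p @ tl q) = upath_edges p \<union> upath_edges q"
    "length (p @ tl q) + 1 = length p + length q" "set (p @ tl q) = set p \<union> set q"
proof -
  obtain p' where p': "p = x # p'" "p' \<noteq> []" "last p' = y" using list_pathE[OF p] by blast
  obtain q' where q': "q = y # q'" "q' \<noteq> []" "y \<notin> set q'" "last q' = z" "distinct q'"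
    using list_pathE[OF q] by blast
  show "upath_edges (p @ tl q) = upath_edges p \<union> upath_edges q"
    using upath_edges_append_tl[of p q] p' q' by simp
  show "length (p @ tl q) + 1 = length p + length q" using q' by simp
  show "set (p @ tl q) = set p \<union> set q" using q' list_path_endpoints_in_set[OF p] by auto
  have "set p \<inter> set q' = {}" using pq q' by auto
  then show "list_path (p @ tl q) x z"
    using p q' p' unfolding list_path_def by auto
qed

definition cycle_edges :: "'v list \<Rightarrow> 'v set set" where
  "cycle_edges cs = upath_edges (cs @ [hd cs])"

lemma cycle_edges_conv_nth:
  assumes "cs \<noteq> []"
  shows "cycle_edges cs = {{cs ! i, cs ! (Suc i mod length cs)} | i. i < length cs}"
proof -
  have "(cs @ [hd cs]) ! Suc i = cs ! (Suc i mod length cs)" if "i < length cs" for i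
  proof (cases "Suc i < length cs")
    case False
    then have "Suc i = length cs" using that by simp
    then show ?thesis using assms by (simp add: nth_append hd_conv_nth)
  qed (simp add: nth_append)
  moreover have "(cs @ [hd cs]) ! i = cs ! i" if "i < length cs" for i
    using that by (simp add: nth_append)
  ultimately have "cycle_edges cs = (\<lambda>i. {cs ! i, cs ! (Suc i mod length cs)}) ` {..<length cs}"
    unfolding cycle_edges_def upath_edges_def setcompr_eq_image by (simp add: lessThan_def)
  then show ?thesis by (simp only: setcompr_eq_image lessThan_def)
qed

lemma is_ucycle_iff_cycle_edges:
  "is_ucycle E \<longleftrightarrow> (\<exists>cs. distinct cs \<and> 3 \<le> length cs \<and> E = cycle_edges cs)"
proof -
  have "cycle_edges cs = {{cs ! i, cs ! (Suc i mod length cs)} | i. i < length cs}"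
    if "3 \<le> length cs" for cs :: "'a list"
    using that by (intro cycle_edges_conv_nth) auto
  then show ?thesis unfolding is_ucycle_def by blast
qed

lemma Union_cycle_edges: "3 \<le> length cs \<Longrightarrow> \<Union> (cycle_edges cs) = set cs"
proof -
  assume "3 \<le> length cs"
  then have "hd cs \<in> set cs" by (intro hd_in_set) auto
  with \<open>3 \<le> length cs\<close> show ?thesis
    unfolding cycle_edges_def by (subst Union_upath_edges) auto
qed

lemma card_cycle_edges:
  assumes "distinct cs" "3 \<le> length cs"
  shows "card (cycle_edges cs) = length cs"
proof -
  obtain x y z zs where cs: "cs = x # y # z # zs"
    using assms(2) by (auto simp: numeral_3_eq_3 Suc_le_length_iff)
  have "{last cs, x} \<notin> upath_edges cs"
  proof
    assume "{last cs, x} \<in> upath_edges cs"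
    moreover have "x \<notin> set (y # z # zs)" "last cs \<noteq> y" "last cs \<in> set (z # zs)"
      using assms(1) cs by auto
    ultimately show False
      using upath_edges_subset_set[of "{last cs, x}" "y # z # zs"] cs
      by (auto simp: doubleton_eq_iff)
  qed
  moreover have "cycle_edges cs = insert {last cs, x} (upath_edges cs)"
    unfolding cycle_edges_def using upath_edges_append[of cs "[hd cs]"] cs by simp
  ultimately have "card (cycle_edges cs) = card (upath_edges cs) + 1" by simp
  then show ?thesis using card_upath_edges[OF assms(1)] cs by simp
qed

lemma cycle_edges_of_paths:
  assumes p: "list_path p x y" and q: "list_path q y x" and pq: "set p \<inter> set q \<subseteq> {x, y}"
  defines "cs \<equiv> p @ butlast (tl q)"
  shows "distinct cs" "length cs + 2 = length p + length q"
    "cycle_edges cs = upath_edges p \<union> upath_edges q" "set cs = set p \<union> set q"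
proof -
  obtain p' where p': "p = x # p'" using list_pathE[OF p] by blast
  obtain q' where q': "q = y # q'" "q' \<noteq> []" "y \<notin> set q'" "last q' = x" "distinct q'"
    using list_pathE[OF q] by blast
  obtain r where r: "q' = r @ [x]" using q'(2,4) by (metis append_butlast_last_id)
  have cs: "cs = p @ r" by (simp add: cs_def q'(1) r)
  have "x \<notin> set r" "distinct r" "set r \<subseteq> set q" "y \<notin> set r"
    using q'(1,3,5) r by auto
  then have "set p \<inter> set r = {}" using pq by blast
  with \<open>distinct r\<close> show "distinct cs" using p unfolding cs list_path_def by simp
  show "length cs + 2 = length p + length q" by (simp add: cs q'(1) r)
  have "cs @ [hd cs] = p @ tl q" by (simp add: cs p' q'(1) r)
  then show "cycle_edges cs = upath_edges p \<union> upath_edges q"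
    unfolding cycle_edges_def using upath_edges_append_tl[of p q] p q
    by (simp add: list_path_def p' q'(1))
  show "set cs = set p \<union> set q"
    using list_path_endpoints_in_set[OF p] by (auto simp: cs q'(1) r)
qed

lemma cycle_arcs_ordered:
  assumes "distinct cs" "a < b" "b < length cs"
  shows "\<exists>p1 p2. list_path p1 (cs ! a) (cs ! b) \<and> list_path p2 (cs ! a) (cs ! b)
    \<and> upath_edges p1 \<subseteq> cycle_edges cs \<and> upath_edges p2 \<subseteq> cycle_edges cs
    \<and> length p1 + length p2 = length cs + 2"
proof -
  have cyc: "cycle_edges cs = insert {last cs, hd cs} (upath_edges cs)"
  proof -
    have "cs \<noteq> []" using assms by auto
    then show ?thesis unfolding cycle_edges_def using upath_edges_append[of cs "[hd cs]"] by simp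
  qed
  define p1 where "p1 = drop a (take (Suc b) cs)"
  define D where "D = drop b cs"
  define T where "T = take (Suc a) cs"
  define p2 where "p2 = rev (D @ T)"
  have D: "D \<noteq> []" "hd D = cs ! b" "last D = last cs"
    unfolding D_def using assms by (auto simp: hd_drop_conv_nth)
  have T: "T \<noteq> []" "hd T = hd cs" "last T = cs ! a"
    unfolding T_def using assms by ((cases cs; simp), (cases cs; simp), simp add: take_Suc_conv_app_nth)
  have "set T \<inter> set D = {}"
    unfolding T_def D_def using assms by (simp add: set_take_disj_set_drop_if_distinct)
  have "last (take (Suc b) cs) = cs ! b" using assms by (simp add: take_Suc_conv_app_nth)
  then have "list_path p1 (cs ! a) (cs ! b)"
    unfolding p1_def list_path_def using assms by (simp add: hd_drop_conv_nth)
  moreover have "upath_edges p1 \<subseteq> cycle_edges cs"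
    unfolding p1_def cyc using upath_edges_drop[of a] upath_edges_take[of "Suc b" cs] by blast
  moreover have "list_path p2 (cs ! a) (cs ! b)"
    unfolding p2_def list_path_def using assms T D \<open>set T \<inter> set D = {}\<close>
    by (auto simp: hd_rev last_rev D_def T_def Int_commute)
  moreover have "upath_edges p2 = insert {last cs, hd cs} (upath_edges D \<union> upath_edges T)"
    unfolding p2_def upath_edges_rev using upath_edges_append[OF D(1) T(1)] D T by simp
  then have "upath_edges p2 \<subseteq> cycle_edges cs"
    unfolding cyc D_def T_def using upath_edges_drop[of b cs] upath_edges_take[of "Suc a" cs] by blast
  moreover have "length p1 + length p2 = length cs + 2"
    unfolding p1_def p2_def D_def T_def using assms by simp
  ultimately show ?thesis by blast
qed

lemma cycle_arcs:
  assumes "distinct cs" "x \<in> set cs" "y \<in> set cs" "x \<noteq> y"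
  obtains p1 p2 where "list_path p1 x y" "list_path p2 x y"
    "upath_edges p1 \<subseteq> cycle_edges cs" "upath_edges p2 \<subseteq> cycle_edges cs"
    "length p1 + length p2 = length cs + 2"
proof -
  obtain a b where ab: "a < length cs" "b < length cs" "x = cs ! a" "y = cs ! b"
    using assms(2,3) by (auto simp: in_set_conv_nth)
  then consider "a < b" | "b < a" using assms(4) by fastforce
  then show thesis
  proof cases
    case 1
    then show thesis using that cycle_arcs_ordered[OF assms(1) 1 ab(2)] ab by blast
  next
    case 2
    then show thesis using that cycle_arcs_ordered[OF assms(1) 2 ab(1)] ab
      by (metis length_rev list_path_rev upath_edges_rev)
  qed
qed

text \<open>The two arcs between x and y have lengths of different parity.\<close>
lemma odd_cycle_path_parity:
  assumes "distinct cs" "odd (length cs)" "x \<in> set cs" "y \<in> set cs" "x \<noteq> y"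
  obtains p where "list_path p x y" "upath_edges p \<subseteq> cycle_edges cs" "even (length p) = b"
proof -
  obtain p1 p2 where "list_path p1 x y" "list_path p2 x y"
    "upath_edges p1 \<subseteq> cycle_edges cs" "upath_edges p2 \<subseteq> cycle_edges cs"
    "length p1 + length p2 = length cs + 2"
    using cycle_arcs[OF assms(1,3-5)] .
  moreover from this(5) assms(2) have "even (length p1) \<noteq> even (length p2)" by presburger
  ultimately show thesis using that by metis
qed

lemma rtrancl_uadj_list_path:
  assumes "(x, y) \<in> (uadj E)\<^sup>*" "x \<noteq> y"
  obtains p where "list_path p x y" "upath_edges p \<subseteq> E"
proof -
  from assms(1) have "\<exists>p. distinct p \<and> p \<noteq> [] \<and> hd p = x \<and> last p = y \<and> upath_edges p \<subseteq> E"
  proof (induction rule: rtrancl_induct)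
    case base
    show ?case by (intro exI[of _ "[x]"]) simp
  next
    case (step y z)
    then obtain p where p: "distinct p" "p \<noteq> []" "hd p = x" "last p = y" "upath_edges p \<subseteq> E"
      by blast
    show ?case
    proof (cases "z \<in> set p")
      case True
      then obtain i where i: "i < length p" "p ! i = z" by (auto simp: in_set_conv_nth)
      have "hd (take (Suc i) p) = x" using p by (cases p) auto
      moreover have "last (take (Suc i) p) = z" using i by (simp add: take_Suc_conv_app_nth)
      ultimately show ?thesis using p upath_edges_take[of "Suc i" p]
        by (intro exI[of _ "take (Suc i) p"]) auto
    next
      case False
      have "{y, z} \<in> E" using step(2) unfolding uadj_def by simp
      then show ?thesis using p False upath_edges_append[of p "[z]"]
        by (intro exI[of _ "p @ [z]"]) auto
    qed
  qed
  then obtain p where p: "distinct p" "p \<noteq> []" "hd p = x" "last p = y" "upath_edges p \<subseteq> E"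
    by blast
  then have "length p \<noteq> 0" "length p \<noteq> 1" using assms(2) by (auto simp: length_Suc_conv)
  then have "2 \<le> length p" by linarith
  then show thesis using that p unfolding list_path_def by blast
qed

lemma list_path_length_2: "list_path p x y \<Longrightarrow> length p = 2 \<Longrightarrow> p = [x, y]"
  by (elim list_pathE) (auto simp: length_Suc_conv)

lemma two_paths_cycle:
  assumes p: "list_path p s t" and q: "list_path q s t" and "set p \<inter> set q \<subseteq> {s, t}"
    and "upath_edges p \<inter> upath_edges q = {}"
  obtains cs where "distinct cs" "3 \<le> length cs" "length cs + 2 = length p + length q"
    "cycle_edges cs = upath_edges p \<union> upath_edges q" "set cs = set p \<union> set q"
proof -
  note cs = cycle_edges_of_paths[OF p list_path_rev[OF q],
      unfolded set_rev length_rev upath_edges_rev, OF assms(3)]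
  have "\<not> (length p = 2 \<and> length q = 2)"
    using assms list_path_length_2[OF p] list_path_length_2[OF q] by auto
  moreover have "2 \<le> length p" "2 \<le> length q" using p q unfolding list_path_def by auto
  ultimately have "3 \<le> length (p @ butlast (tl (rev q)))" using cs(2) by linarith
  then show thesis by (rule that[OF cs(1) _ cs(2-4)])
qed

lemma two_paths_path_parity:
  assumes p: "list_path p s t" and q: "list_path q s t" and "set p \<inter> set q \<subseteq> {s, t}"
    and "upath_edges p \<inter> upath_edges q = {}" and "odd (length p + length q)"
    and "x \<in> set p \<union> set q" "y \<in> set p \<union> set q" "x \<noteq> y"
  obtains r where "list_path r x y" "upath_edges r \<subseteq> upath_edges p \<union> upath_edges q"
    "even (length r) = b"
proof -
  obtain cs where cs: "distinct cs" "3 \<le> length cs" "length cs + 2 = length p + length q"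
    "cycle_edges cs = upath_edges p \<union> upath_edges q" "set cs = set p \<union> set q"
    by (rule two_paths_cycle[OF assms(1-4)])
  from cs(3) assms(5) have "odd (length cs)" by presburger
  with cs(1,5) assms(6-8) obtain r where "list_path r x y" "upath_edges r \<subseteq> cycle_edges cs"
    "even (length r) = b"
    by (metis odd_cycle_path_parity)
  then show thesis using that cs(4) by simp
qed

lemma list_path_split:
  assumes q: "list_path q s t" and "x \<in> set q" "x \<noteq> s" "x \<noteq> t"
  obtains l r where "list_path l x s" "list_path r x t" "set l \<subseteq> set q" "set r \<subseteq> set q"
    "t \<notin> set l" "s \<notin> set r" "upath_edges l \<union> upath_edges r = upath_edges q"
    "upath_edges l \<inter> upath_edges r = {}"
proof -
  obtain q1 q2 where qx: "q = q1 @ x # q2" using assms(2) by (meson split_list)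
  have "q1 \<noteq> []" using q qx assms(3) unfolding list_path_def by (cases q1) auto
  moreover have "q2 \<noteq> []" using q qx assms(4) unfolding list_path_def by (cases q2) auto
  moreover have "hd q1 = s" "last q2 = t" "distinct q" using q qx calculation unfolding list_path_def by auto
  ultimately have l: "list_path (rev (q1 @ [x])) x s" and r: "list_path (x # q2) x t"
    using qx unfolding list_path_def by (auto simp: hd_rev last_rev Suc_le_length_iff neq_Nil_conv)
  have "t \<notin> set (q1 @ [x])" "s \<notin> set (x # q2)"
    using \<open>distinct q\<close> qx \<open>hd q1 = s\<close> \<open>last q2 = t\<close> hd_in_set[OF \<open>q1 \<noteq> []\<close>]
      last_in_set[OF \<open>q2 \<noteq> []\<close>] by auto
  moreover have "upath_edges (q1 @ [x]) \<union> upath_edges (x # q2) = upath_edges q"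
    using qx upath_edges_append_tl[of "q1 @ [x]" "x # q2"] by simp
  moreover have "upath_edges (q1 @ [x]) \<inter> upath_edges (x # q2) = {}"
    using \<open>distinct q\<close> qx by (intro upath_edges_disjoint[where z = x]) auto
  moreover have "upath_edges (rev (q1 @ [x])) = upath_edges (q1 @ [x])"
    by (rule upath_edges_rev)
  ultimately show thesis using qx by (intro that[OF l r]) auto
qed

lemma path_to_odd_cycle_path_parity:
  assumes l: "list_path l x u" and "distinct cs" "odd (length cs)" "u \<in> set cs" "y \<in> set cs"
    "y \<noteq> u" "set l \<inter> set cs \<subseteq> {u}"
  obtains p where "list_path p x y" "upath_edges p \<subseteq> upath_edges l \<union> cycle_edges cs"
    "even (length p) = b"
proof -
  obtain r where r: "list_path r u y" "upath_edges r \<subseteq> cycle_edges cs"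
    "even (length r) = (even (length l) \<noteq> b)"
    using odd_cycle_path_parity[OF assms(2-5) assms(6)[symmetric]] by metis
  have "length cs \<noteq> 0" "length cs \<noteq> 1" using assms(4-6) by (auto simp: length_Suc_conv)
  with assms(3) have "3 \<le> length cs" by presburger
  then have "set r \<subseteq> set cs"
    using r(2) Union_upath_edges_list_path[OF r(1)] Union_cycle_edges[of cs] by (metis Union_mono)
  moreover have "x \<in> set l" using list_path_endpoints_in_set[OF l] by simp
  ultimately have "set l \<inter> set r \<subseteq> {u}" "x \<noteq> y" using assms(5-7) by auto
  note p = list_path_append_tl[OF l r(1) this]
  have "even (length (l @ tl r)) \<longleftrightarrow> even (length l) \<noteq> even (length r)"
    using p(3) by presburger
  with r(3) have "even (length (l @ tl r)) = b" by blast
  then show thesis using that p(1,2) r(2) by blast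
qed

lemma path_chain:
  assumes "\<And>i. i \<le> n \<Longrightarrow> list_path (p i) (w i) (w (Suc i))"
    and "\<And>i. i < n \<Longrightarrow> set (p i) \<inter> set (p (Suc i)) \<subseteq> {w (Suc i)}"
    and "\<And>i j. Suc i < j \<Longrightarrow> j \<le> n \<Longrightarrow> set (p i) \<inter> set (p j) = {}"
    and "\<And>i. i \<le> n \<Longrightarrow> w 0 \<noteq> w (Suc i)"
  shows "\<exists>W. list_path W (w 0) (w (Suc n)) \<and> set W = (\<Union>i\<le>n. set (p i))
    \<and> upath_edges W = (\<Union>i\<le>n. upath_edges (p i)) \<and> length W = Suc (\<Sum>i\<le>n. length (p i) - 1)"
  using assms
proof (induction n)
  case 0
  then have "list_path (p 0) (w 0) (w (Suc 0))" by simp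
  moreover from this have "length (p 0) = Suc (length (p 0) - 1)" unfolding list_path_def by linarith
  ultimately show ?case by (intro exI[of _ "p 0"]) simp
next
  case (Suc n)
  have "\<exists>W. list_path W (w 0) (w (Suc n)) \<and> set W = (\<Union>i\<le>n. set (p i))
    \<and> upath_edges W = (\<Union>i\<le>n. upath_edges (p i)) \<and> length W = Suc (\<Sum>i\<le>n. length (p i) - 1)"
    by (rule Suc.IH) (simp_all add: Suc.prems)
  then obtain W where W: "list_path W (w 0) (w (Suc n))" "set W = (\<Union>i\<le>n. set (p i))"
    "upath_edges W = (\<Union>i\<le>n. upath_edges (p i))" "length W = Suc (\<Sum>i\<le>n. length (p i) - 1)"
    by blast
  have "set (p i) \<inter> set (p (Suc n)) \<subseteq> {w (Suc n)}" if "i \<le> n" for i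
    using that Suc.prems(2)[of i] Suc.prems(3)[of i "Suc n"] by (cases "i = n") auto
  then have "set W \<inter> set (p (Suc n)) \<subseteq> {w (Suc n)}" using W(2) by blast
  note glue = list_path_append_tl[OF W(1) Suc.prems(1)[OF order.refl] this Suc.prems(4)[OF order.refl]]
  have "2 \<le> length (p (Suc n))" using Suc.prems(1)[OF order.refl] unfolding list_path_def by simp
  moreover have "set W \<union> set (p (Suc n)) = (\<Union>i\<le>Suc n. set (p i))"
    "upath_edges W \<union> upath_edges (p (Suc n)) = (\<Union>i\<le>Suc n. upath_edges (p i))"
    using W(2,3) by (auto simp: atMost_Suc)
  ultimately show ?case using glue W(4) by (intro exI[of _ "W @ tl (p (Suc n))"]) simp
qed

lemma path_ring_cycle:
  assumes k: "3 \<le> k" and w: "inj_on w {..<k}"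
    and p: "\<And>i. i < k \<Longrightarrow> list_path (p i) (w i) (w (Suc i mod k))"
    and adjacent: "\<And>i. Suc i < k \<Longrightarrow> set (p i) \<inter> set (p (Suc i)) \<subseteq> {w (Suc i)}"
    and closing: "set (p 0) \<inter> set (p (k - 1)) \<subseteq> {w 0}"
    and far: "\<And>i j. Suc i < j \<Longrightarrow> j < k \<Longrightarrow> \<not> (i = 0 \<and> j = k - 1) \<Longrightarrow> set (p i) \<inter> set (p j) = {}"
  obtains cs where "distinct cs" "length cs = (\<Sum>i<k. length (p i) - 1)"
    "cycle_edges cs = (\<Union>i<k. upath_edges (p i))"
proof -
  define n where "n = k - 2"
  have n: "Suc n = k - 1" "Suc (Suc n) = k" using k unfolding n_def by simp_all
  have "\<exists>W. list_path W (w 0) (w (Suc n)) \<and> set W = (\<Union>i\<le>n. set (p i))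
    \<and> upath_edges W = (\<Union>i\<le>n. upath_edges (p i)) \<and> length W = Suc (\<Sum>i\<le>n. length (p i) - 1)"
  proof (rule path_chain)
    show "list_path (p i) (w i) (w (Suc i))" if "i \<le> n" for i using that p[of i] n by simp
    show "w 0 \<noteq> w (Suc i)" if "i \<le> n" for i using that n(2) inj_onD[OF w, of 0 "Suc i"] by auto
  qed (use adjacent far n in simp_all)
  then obtain W where W: "list_path W (w 0) (w (k - 1))" "set W = (\<Union>i\<le>n. set (p i))"
    "upath_edges W = (\<Union>i\<le>n. upath_edges (p i))" "length W = Suc (\<Sum>i\<le>n. length (p i) - 1)"
    using n(1) by metis
  have last: "list_path (p (k - 1)) (w (k - 1)) (w 0)" using p[of "k - 1"] k by simp
  have "set (p i) \<inter> set (p (k - 1)) \<subseteq> {w 0, w (k - 1)}" if i: "i \<le> n" for i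
  proof -
    consider "i = 0" | "i = n" | "0 < i" "i < n" using i by linarith
    then show ?thesis
    proof cases
      case 1 then show ?thesis using closing by blast
    next
      case 2 then show ?thesis using adjacent[of n] n by auto
    next
      case 3 then show ?thesis using far[of i "k - 1"] n by simp
    qed
  qed
  then have "set W \<inter> set (p (k - 1)) \<subseteq> {w 0, w (k - 1)}" using W(2) by blast
  note cs = cycle_edges_of_paths[OF W(1) last this]
  have "{..<k} = insert (k - 1) {..n}" using n by auto
  then have "(\<Sum>i<k. length (p i) - 1) = (length (p (k - 1)) - 1) + (\<Sum>i\<le>n. length (p i) - 1)"
    using n by simp
  moreover have "2 \<le> length (p (k - 1))" using last unfolding list_path_def by simp
  ultimately have "length (W @ butlast (tl (p (k - 1)))) = (\<Sum>i<k. length (p i) - 1)"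
    using cs(2) W(4) by linarith
  moreover have "cycle_edges (W @ butlast (tl (p (k - 1)))) = (\<Union>i<k. upath_edges (p i))"
    using cs(3) W(3) \<open>{..<k} = _\<close> by auto
  ultimately show thesis using that cs(1) by blast
qed

section \<open>Theta graphs\<close>

definition theta_lists :: "'v list \<Rightarrow> 'v list \<Rightarrow> 'v list \<Rightarrow> 'v \<Rightarrow> 'v \<Rightarrow> bool" where
  "theta_lists qa qb qc s t \<longleftrightarrow> list_path qa s t \<and> list_path qb s t \<and> list_path qc s t
     \<and> set qa \<inter> set qb \<subseteq> {s, t} \<and> set qa \<inter> set qc \<subseteq> {s, t} \<and> set qb \<inter> set qc \<subseteq> {s, t}
     \<and> upath_edges qa \<inter> upath_edges qb = {} \<and> upath_edges qa \<inter> upath_edges qc = {}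
     \<and> upath_edges qb \<inter> upath_edges qc = {}"

lemma theta_listsD:
  assumes "theta_lists qa qb qc s t"
  shows "list_path qa s t" "list_path qb s t" "list_path qc s t"
    "set qa \<inter> set qb \<subseteq> {s, t}" "set qa \<inter> set qc \<subseteq> {s, t}" "set qb \<inter> set qc \<subseteq> {s, t}"
    "upath_edges qa \<inter> upath_edges qb = {}" "upath_edges qa \<inter> upath_edges qc = {}"
    "upath_edges qb \<inter> upath_edges qc = {}"
  using assms unfolding theta_lists_def by simp_all

lemma theta_lists_swap_12: "theta_lists qa qb qc s t \<Longrightarrow> theta_lists qb qa qc s t"
  unfolding theta_lists_def by blast

lemma theta_lists_swap_23: "theta_lists qa qb qc s t \<Longrightarrow> theta_lists qa qc qb s t"
  unfolding theta_lists_def by blast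

text \<open>From x inside qa, walk along qa to a terminal avoiding ea, then around the odd cycle
  qb + qc to y.\<close>
lemma theta_cross_path_parity:
  assumes th: "theta_lists qa qb qc s t" and odd: "odd (length qb + length qc)"
    and ea: "ea \<in> upath_edges qa" and x: "x \<in> set qa" "x \<notin> set qc"
    and y: "y \<in> set qb" "y \<notin> set qc"
  obtains p where "list_path p x y"
    "upath_edges p \<subseteq> upath_edges qa \<union> upath_edges qb \<union> upath_edges qc"
    "ea \<notin> upath_edges p" "even (length p) = b"
proof -
  note th' = theta_listsD[OF th] and result = that
  obtain cs where cs: "distinct cs" "3 \<le> length cs" "length cs + 2 = length qb + length qc"
    "cycle_edges cs = upath_edges qb \<union> upath_edges qc" "set cs = set qb \<union> set qc"
    by (rule two_paths_cycle[OF th'(2,3,6,9)])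
  have "odd (length cs)" using cs(3) odd by presburger
  have st: "s \<in> set qc" "t \<in> set qc" using list_path_endpoints_in_set[OF th'(3)] by blast+
  have reach: thesis
    if l: "list_path l x u" "u \<in> {s, t}" "set l \<subseteq> set qa" "set l \<inter> set qc \<subseteq> {u}"
      "upath_edges l \<subseteq> upath_edges qa" "ea \<notin> upath_edges l" for l u
  proof -
    have "u \<in> set cs" "y \<in> set cs" "y \<noteq> u" using cs(5) st l(2) y by auto
    moreover have "set l \<inter> set cs \<subseteq> {u}" using l(3,4) th'(4) cs(5) st by blast
    ultimately obtain p where p: "list_path p x y"
      "upath_edges p \<subseteq> upath_edges l \<union> cycle_edges cs" "even (length p) = b"
      by (rule path_to_odd_cycle_path_parity[where b = b, OF l(1) cs(1) \<open>odd (length cs)\<close>])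
    have "ea \<notin> upath_edges qb \<union> upath_edges qc" using ea th'(7,8) by blast
    then show thesis using result p l(5,6) cs(4) by blast
  qed
  have "x \<noteq> s" "x \<noteq> t" using x(2) st by auto
  then obtain l r where lr: "list_path l x s" "list_path r x t" "set l \<subseteq> set qa" "set r \<subseteq> set qa"
    "t \<notin> set l" "s \<notin> set r" "upath_edges l \<union> upath_edges r = upath_edges qa"
    "upath_edges l \<inter> upath_edges r = {}"
    by (rule list_path_split[OF th'(1) x(1)])
  have "set l \<inter> set qc \<subseteq> {s}" "set r \<inter> set qc \<subseteq> {t}" using lr(3-6) th'(5) by auto
  then consider "ea \<notin> upath_edges l" | "ea \<notin> upath_edges r" using lr(8) by blast
  then show thesis
  proof cases
    case 1
    then show thesis using reach[of l s] lr \<open>set l \<inter> set qc \<subseteq> {s}\<close> by blast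
  next
    case 2
    then show thesis using reach[of r t] lr \<open>set r \<inter> set qc \<subseteq> {t}\<close> by blast
  qed
qed

lemma theta_path_parity:
  assumes th: "theta_lists qa qb qc s t"
    and odd: "odd (length qa + length qc)" "odd (length qb + length qc)"
    and e: "ea \<in> upath_edges qa" "eb \<in> upath_edges qb"
    and xy: "x \<in> set qa \<union> set qb \<union> set qc" "y \<in> set qa \<union> set qb \<union> set qc" "x \<noteq> y"
  obtains p where "list_path p x y"
    "upath_edges p \<subseteq> upath_edges qa \<union> upath_edges qb \<union> upath_edges qc"
    "ea \<notin> upath_edges p \<or> eb \<notin> upath_edges p" "even (length p) = b"
proof -
  note th' = theta_listsD[OF th]
  consider "x \<in> set qa \<union> set qc" "y \<in> set qa \<union> set qc"
    | "x \<in> set qb \<union> set qc" "y \<in> set qb \<union> set qc"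
    | "x \<in> set qa" "x \<notin> set qc" "y \<in> set qb" "y \<notin> set qc"
    | "x \<in> set qb" "x \<notin> set qc" "y \<in> set qa" "y \<notin> set qc"
    using xy by blast
  then show thesis
  proof cases
    case 1
    obtain p where "list_path p x y" "upath_edges p \<subseteq> upath_edges qa \<union> upath_edges qc"
      "even (length p) = b"
      using th'(1,3,5,8) odd(1) 1 xy(3) by (rule two_paths_path_parity[where b = b]) auto
    moreover have "eb \<notin> upath_edges qa \<union> upath_edges qc" using e th'(7,9) by blast
    ultimately show thesis using that by blast
  next
    case 2
    obtain p where "list_path p x y" "upath_edges p \<subseteq> upath_edges qb \<union> upath_edges qc"
      "even (length p) = b"
      using th'(2,3,6,9) odd(2) 2 xy(3) by (rule two_paths_path_parity[where b = b]) auto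
    moreover have "ea \<notin> upath_edges qb \<union> upath_edges qc" using e th'(7,8) by blast
    ultimately show thesis using that by blast
  next
    case 3
    show thesis by (rule theta_cross_path_parity[OF th odd(2) e(1) 3]) (use that in blast)
  next
    case 4
    show thesis
      by (rule theta_cross_path_parity[OF theta_lists_swap_12[OF th] odd(1) e(2) 4]) (use that in blast)
  qed
qed

section \<open>Colored graphs\<close>

lemma inj_on_fst_cgraph: "cgraph G \<Longrightarrow> inj_on fst G"
  unfolding cgraph_def inj_on_def by blast

lemma cgraph_subset: "cgraph G \<Longrightarrow> H \<subseteq> G \<Longrightarrow> cgraph H"
  unfolding cgraph_def by (meson finite_subset subsetD)

lemma finite_verts: "cgraph G \<Longrightarrow> finite (verts G)"
  unfolding cgraph_def verts_def by (metis card.infinite finite_Union finite_imageI imageE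
      zero_neq_numeral)

lemma rainbow_iff_inj_on: "finite G \<Longrightarrow> rainbow G \<longleftrightarrow> inj_on snd G"
  unfolding rainbow_def colors_def by (simp add: inj_on_iff_eq_card)

lemma almost_rainbow_repeated_color:
  assumes "finite G" "almost_rainbow G"
  obtains e e' where "e \<in> G" "e' \<in> G" "e \<noteq> e'" "snd e = snd e'"
    "inj_on snd (G - {e})" "inj_on snd (G - {e'})"
proof -
  have card: "card (snd ` G) + 1 = card G" using assms(2) unfolding almost_rainbow_def colors_def .
  then obtain e e' where e: "e \<in> G" "e' \<in> G" "e \<noteq> e'" "snd e = snd e'"
    using card_image[of snd G] unfolding inj_on_def by force
  have inj: "inj_on snd (G - {f})" if "f \<in> G" "f' \<in> G" "f \<noteq> f'" "snd f = snd f'" for f f'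
  proof -
    have "snd ` (G - {f}) = snd ` G" using that by (auto simp: image_iff)
    moreover have "card (G - {f}) = card G - 1" using that(1) by simp
    ultimately show ?thesis using card assms(1) by (simp add: inj_on_iff_eq_card)
  qed
  show thesis using that[OF e inj[OF e]] inj[of e' e] e by simp
qed

definition edge_restrict :: "('v, 'c) cgraph \<Rightarrow> 'v set set \<Rightarrow> ('v, 'c) cgraph" where
  "edge_restrict G E = {q \<in> G. fst q \<in> E}"

definition rainbow_on :: "('v, 'c) cgraph \<Rightarrow> 'v set set \<Rightarrow> bool" where
  "rainbow_on G E \<longleftrightarrow> E \<subseteq> fst ` G \<and> inj_on snd (edge_restrict G E)"

definition rainbow_path_in :: "('v, 'c) cgraph \<Rightarrow> 'v \<Rightarrow> 'v \<Rightarrow> 'v list \<Rightarrow> bool" where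
  "rainbow_path_in G x y p \<longleftrightarrow> list_path p x y \<and> rainbow_on G (upath_edges p)"

lemma rainbow_on_if_inj_on_Diff:
  "E \<subseteq> fst ` G \<Longrightarrow> fst f \<notin> E \<Longrightarrow> inj_on snd (G - {f}) \<Longrightarrow> rainbow_on G E"
  unfolding rainbow_on_def edge_restrict_def by (auto elim: inj_on_subset)

lemma rainbow_on_if_rainbow:
  "cgraph G \<Longrightarrow> rainbow G \<Longrightarrow> E \<subseteq> fst ` G \<Longrightarrow> rainbow_on G E"
  unfolding rainbow_on_def edge_restrict_def cgraph_def
  by (auto simp: rainbow_iff_inj_on elim: inj_on_subset)

lemma cpath_list_path:
  assumes "cpath P s t"
  obtains q where "list_path q s t" "fst ` P = upath_edges q" "verts P = set q"
  using assms unfolding cpath_def is_upath_iff_list_path verts_def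
  by (metis Union_upath_edges_list_path)

lemma verts_ccycle:
  assumes "ccycle G"
  obtains cs where "distinct cs" "3 \<le> length cs" "fst ` G = cycle_edges cs" "verts G = set cs"
    "card G = length cs"
proof -
  obtain cs where cs: "distinct cs" "3 \<le> length cs" "fst ` G = cycle_edges cs"
    using assms unfolding ccycle_def is_ucycle_iff_cycle_edges by blast
  moreover have "card G = length cs"
    using assms cs card_image[OF inj_on_fst_cgraph] card_cycle_edges unfolding ccycle_def by metis
  ultimately show thesis using that Union_cycle_edges[OF cs(2)] unfolding verts_def by metis
qed

lemma edge_restrict_image_fst:
  assumes G: "cgraph G" and P: "P \<subseteq> G"
  shows "edge_restrict G (fst ` P) = P"
proof -
  have "q \<in> P" if q: "q \<in> G" "fst q \<in> fst ` P" for q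
  proof -
    obtain p where "p \<in> P" "fst q = fst p" using q(2) by blast
    moreover have "p \<in> G" using P \<open>p \<in> P\<close> by blast
    ultimately show ?thesis using inj_onD[OF inj_on_fst_cgraph[OF G]] q(1) by metis
  qed
  then show ?thesis unfolding edge_restrict_def using P by blast
qed

lemma bad_piece_theta_lists:
  assumes "bad_piece G"
  obtains q1 q2 q3 s t where "theta_lists q1 q2 q3 s t"
    "fst ` G = upath_edges q1 \<union> upath_edges q2 \<union> upath_edges q3"
    "rainbow_on G (upath_edges q1)" "rainbow_on G (upath_edges q2)" "rainbow_on G (upath_edges q3)"
proof -
  obtain P1 P2 P3 s t where th: "theta_paths P1 P2 P3 s t"
    and rb: "rainbow P1" "rainbow P2" "rainbow P3" and GP: "G = P1 \<union> P2 \<union> P3"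
    using assms unfolding bad_piece_def by blast
  have G: "cgraph G" using assms unfolding bad_piece_def theta_graph_def by blast
  note th' = th[unfolded theta_paths_def]
  have cp: "cpath P1 s t" "cpath P2 s t" "cpath P3 s t" using th' by simp_all
  obtain q1 where q1: "list_path q1 s t" "fst ` P1 = upath_edges q1" "verts P1 = set q1"
    using cpath_list_path[OF cp(1)] .
  obtain q2 where q2: "list_path q2 s t" "fst ` P2 = upath_edges q2" "verts P2 = set q2"
    using cpath_list_path[OF cp(2)] .
  obtain q3 where q3: "list_path q3 s t" "fst ` P3 = upath_edges q3" "verts P3 = set q3"
    using cpath_list_path[OF cp(3)] .
  have rainbow_on: "rainbow_on G (fst ` P)" if "P \<subseteq> G" "rainbow P" for P
    using that G cgraph_subset[OF G that(1)] edge_restrict_image_fst[OF G that(1)]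
      image_mono[OF that(1), of fst]
    unfolding rainbow_on_def by (simp add: cgraph_def rainbow_iff_inj_on)
  have "rainbow_on G (upath_edges q1)" "rainbow_on G (upath_edges q2)"
    "rainbow_on G (upath_edges q3)"
    using rainbow_on[OF _ rb(1)] rainbow_on[OF _ rb(2)] rainbow_on[OF _ rb(3)]
    unfolding q1(2) q2(2) q3(2) GP by blast+
  moreover have "theta_lists q1 q2 q3 s t"
    unfolding theta_lists_def using th' q1 q2 q3 by simp
  moreover have "fst ` G = upath_edges q1 \<union> upath_edges q2 \<union> upath_edges q3"
    using GP q1(2) q2(2) q3(2) by (simp add: image_Un)
  ultimately show thesis by (intro that)
qed

lemma rainbow_tree_path:
  assumes "rainbow_tree G" "x \<in> verts G" "y \<in> verts G" "x \<noteq> y"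
  shows "\<exists>p. rainbow_path_in G x y p"
proof -
  have "cgraph G" "rainbow G" "uconnected (fst ` G)"
    using assms(1) unfolding rainbow_tree_def ctree_def is_utree_def by simp_all
  then have "(x, y) \<in> (uadj (fst ` G))\<^sup>*"
    using assms(2,3) unfolding uconnected_def verts_def by blast
  then obtain p where "list_path p x y" "upath_edges p \<subseteq> fst ` G"
    using assms(4) by (rule rtrancl_uadj_list_path)
  then show ?thesis unfolding rainbow_path_in_def
    using rainbow_on_if_rainbow[OF \<open>cgraph G\<close> \<open>rainbow G\<close>] by blast
qed

lemma rainbow_odd_cycle_path_parity:
  assumes "long_rainbow_odd_cycle G" "x \<in> verts G" "y \<in> verts G" "x \<noteq> y"
  shows "\<exists>p. rainbow_path_in G x y p \<and> even (length p) = b"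
proof -
  have G: "ccycle G" "cgraph G" "rainbow G" "odd (card G)"
    using assms(1) unfolding long_rainbow_odd_cycle_def ccycle_def by simp_all
  obtain cs where cs: "distinct cs" "fst ` G = cycle_edges cs" "verts G = set cs"
    "card G = length cs"
    using verts_ccycle[OF G(1)] by metis
  obtain p where "list_path p x y" "upath_edges p \<subseteq> cycle_edges cs" "even (length p) = b"
    using odd_cycle_path_parity[of cs x y b] cs G(4) assms(2-4) by metis
  then show ?thesis unfolding rainbow_path_in_def
    using rainbow_on_if_rainbow[OF G(2,3)] cs(2) by auto
qed

lemma set_subset_verts_if_rainbow_path: "rainbow_path_in G x y p \<Longrightarrow> set p \<subseteq> verts G"
  unfolding rainbow_path_in_def rainbow_on_def verts_def
  using Union_upath_edges_list_path by (metis Union_mono)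

section \<open>Cycles of parts in the auxiliary graph\<close>

text \<open>Parts g 0, ..., g (k-1) and vertices v 0, ..., v (k-1) such that the part g i contains
  v i and v (i+1 mod k), i.e. a cycle of length 2k in the auxiliary graph.\<close>
definition part_cycle ::
  "('v, 'c) cgraph set \<Rightarrow> nat \<Rightarrow> (nat \<Rightarrow> ('v, 'c) cgraph) \<Rightarrow> (nat \<Rightarrow> 'v) \<Rightarrow> bool" where
  "part_cycle Ps k g v \<longleftrightarrow> 2 \<le> k \<and> inj_on g {..<k} \<and> inj_on v {..<k} \<and>
     (\<forall>i<k. g i \<in> Ps \<and> v i \<in> verts (g i) \<and> v (Suc i mod k) \<in> verts (g i))"

definition minimal_part_cycle ::
  "('v, 'c) cgraph set \<Rightarrow> nat \<Rightarrow> (nat \<Rightarrow> ('v, 'c) cgraph) \<Rightarrow> (nat \<Rightarrow> 'v) \<Rightarrow> bool" where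
  "minimal_part_cycle Ps k g v \<longleftrightarrow> part_cycle Ps k g v \<and> (\<forall>k' < k. \<forall>g' v'. \<not> part_cycle Ps k' g' v')"

lemma part_cycleD:
  assumes "part_cycle Ps k g v"
  shows "2 \<le> k" "inj_on g {..<k}" "inj_on v {..<k}" "\<And>i. i < k \<Longrightarrow> g i \<in> Ps"
    "\<And>i. i < k \<Longrightarrow> v i \<in> verts (g i)" "\<And>i. i < k \<Longrightarrow> v (Suc i mod k) \<in> verts (g i)"
  using assms unfolding part_cycle_def by simp_all

lemma exists_minimal_part_cycle:
  assumes "part_cycle Ps k g v"
  obtains k' g' v' where "minimal_part_cycle Ps k' g' v'"
proof -
  obtain k' where "\<exists>g v. part_cycle Ps k' g v" "\<forall>m<k'. \<not> (\<exists>g v. part_cycle Ps m g v)"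
    using assms exists_least_iff[of "\<lambda>k. \<exists>g v. part_cycle Ps k g v"] by blast
  then show thesis using that unfolding minimal_part_cycle_def by blast
qed

lemma inj_on_rotate: "(r::nat) < k \<Longrightarrow> inj_on (\<lambda>i. (i + r) mod k) {..<k}"
proof (rule inj_onI)
  fix a b assume ab: "r < k" "a \<in> {..<k}" "b \<in> {..<k}" "(a + r) mod k = (b + r) mod k"
  have mod_lt2: "x mod k = (if x < k then x else x - k)" if "x < 2 * k" for x
    using that by (simp add: le_mod_geq)
  have "a + r < 2 * k" "b + r < 2 * k" using ab by auto
  then have "(if a + r < k then a + r else a + r - k) = (if b + r < k then b + r else b + r - k)"
    using ab(4) mod_lt2 by simp
  then show "a = b" using ab(2,3) by (auto split: if_splits)
qed

lemma part_cycle_rotate: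
  assumes pc: "part_cycle Ps k g v" and "r < k"
  shows "part_cycle Ps k (\<lambda>i. g ((i + r) mod k)) (\<lambda>i. v ((i + r) mod k))"
proof -
  note pc' = part_cycleD[OF pc]
  have sub: "(\<lambda>i. (i + r) mod k) ` {..<k} \<subseteq> {..<k}" using pc'(1) by auto
  have "inj_on (\<lambda>i. g ((i + r) mod k)) {..<k}" "inj_on (\<lambda>i. v ((i + r) mod k)) {..<k}"
    using comp_inj_on[OF inj_on_rotate[OF assms(2)] inj_on_subset[OF pc'(2) sub]]
      comp_inj_on[OF inj_on_rotate[OF assms(2)] inj_on_subset[OF pc'(3) sub]]
    by (simp_all add: o_def)
  moreover have "Suc ((i + r) mod k) mod k = (Suc i mod k + r) mod k" for i
    by (simp add: mod_Suc_eq mod_add_left_eq)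
  then have "g ((i + r) mod k) \<in> Ps \<and> v ((i + r) mod k) \<in> verts (g ((i + r) mod k))
      \<and> v ((Suc i mod k + r) mod k) \<in> verts (g ((i + r) mod k))" if "i < k" for i
    using pc'(4-6)[of "(i + r) mod k"] pc'(1) by simp
  ultimately show ?thesis unfolding part_cycle_def using pc'(1) by blast
qed

lemma minimal_part_cycle_rotate:
  "minimal_part_cycle Ps k g v \<Longrightarrow> r < k
    \<Longrightarrow> minimal_part_cycle Ps k (\<lambda>i. g ((i + r) mod k)) (\<lambda>i. v ((i + r) mod k))"
  unfolding minimal_part_cycle_def using part_cycle_rotate by blast

lemma part_cycle_shortcut:
  assumes pc: "part_cycle Ps k g v" and j: "1 \<le> j" "Suc j < k"
    and w: "w \<in> verts (g 0)" "w \<in> verts (g j)" "w \<notin> v ` {1..j}"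
  shows "part_cycle Ps (Suc j) g (v(0 := w))"
proof -
  note pc' = part_cycleD[OF pc]
  have "inj_on g {..<Suc j}" using inj_on_subset[OF pc'(2)] j by auto
  moreover have "inj_on (v(0 := w)) {..<Suc j}"
  proof -
    have "{1..j} \<subseteq> {..<k}" using j by auto
    then have "inj_on v {1..j}" using inj_on_subset[OF pc'(3)] by blast
    then have "inj_on (v(0 := w)) {1..j}" by (rule inj_on_cong[THEN iffD1, rotated]) auto
    moreover have "(v(0 := w)) ` {1..j} = v ` {1..j}" by auto
    moreover have "{..<Suc j} = insert 0 {1..j}" by auto
    ultimately show ?thesis using w(3) by simp
  qed
  moreover have "(v(0 := w)) i \<in> verts (g i) \<and> (v(0 := w)) (Suc i mod Suc j) \<in> verts (g i)"
    if "i < Suc j" for i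
  proof (cases "i = j")
    case True
    then show ?thesis using j w pc'(5)[of j] by simp
  next
    case False
    then have "i < j" "Suc i mod Suc j = Suc i" "Suc i mod k = Suc i" using that j by simp_all
    then show ?thesis using j w pc'(5,6)[of i] by simp
  qed
  ultimately show ?thesis unfolding part_cycle_def using pc'(4) j by simp
qed

lemma minimal_part_cycle_shared_vertex:
  assumes m: "minimal_part_cycle Ps k g v" and "1 \<le> j" "Suc j < k"
    and "w \<in> verts (g 0)" "w \<in> verts (g j)"
  obtains l where "1 \<le> l" "l \<le> j" "w = v l"
proof -
  have "w \<in> v ` {1..j}"
  proof (rule ccontr)
    assume "w \<notin> v ` {1..j}"
    with m have "part_cycle Ps (Suc j) g (v(0 := w))"
      unfolding minimal_part_cycle_def using part_cycle_shortcut[OF _ assms(2-5)] by blast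
    then show False using m assms(3) unfolding minimal_part_cycle_def by blast
  qed
  then show thesis using that by auto
qed

text \<open>By minimality, a vertex shared by g 0 and g j is a cycle vertex on each of the two arcs
  between them; these arcs have no cycle vertex in common.\<close>
lemma minimal_part_cycle_no_chord_at_0:
  assumes m: "minimal_part_cycle Ps k g v" and j: "2 \<le> j" "Suc j < k"
    and w: "w \<in> verts (g 0)" "w \<in> verts (g j)"
  shows False
proof -
  obtain l where l: "1 \<le> l" "l \<le> j" "w = v l"
    using minimal_part_cycle_shared_vertex[OF m _ j(2) w] j(1) by auto
  define g' where "g' i = g ((i + j) mod k)" for i
  define v' where "v' i = v ((i + j) mod k)" for i
  have m': "minimal_part_cycle Ps k g' v'"
    unfolding g'_def v'_def using minimal_part_cycle_rotate[OF m] j by simp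
  have "1 \<le> k - j" "Suc (k - j) < k" "w \<in> verts (g' 0)" "w \<in> verts (g' (k - j))"
    using w j unfolding g'_def by simp_all
  then obtain l' where l': "1 \<le> l'" "l' \<le> k - j" "w = v' l'"
    by (rule minimal_part_cycle_shared_vertex[OF m'])
  have "inj_on v {..<k}" using m unfolding minimal_part_cycle_def part_cycle_def by blast
  moreover have "v ((l' + j) mod k) = v l" using l(3) l'(3) unfolding v'_def by simp
  ultimately have "(l' + j) mod k = l" using l(2) j(2) by (auto dest: inj_onD)
  moreover have "l' + j \<le> k" using l'(2) j by simp
  ultimately show False using l l' j by (cases "l' + j = k") auto
qed

lemma minimal_part_cycle_no_chord:
  assumes m: "minimal_part_cycle Ps k g v" and "i < j" "j < k" "j \<noteq> Suc i" "\<not> (i = 0 \<and> j = k - 1)"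
  shows "verts (g i) \<inter> verts (g j) = {}"
proof (rule ccontr)
  assume "verts (g i) \<inter> verts (g j) \<noteq> {}"
  then obtain w where w: "w \<in> verts (g i)" "w \<in> verts (g j)" by blast
  have m': "minimal_part_cycle Ps k (\<lambda>m. g ((m + i) mod k)) (\<lambda>m. v ((m + i) mod k))"
    using minimal_part_cycle_rotate[OF m] assms(2,3) by simp
  show False
    by (rule minimal_part_cycle_no_chord_at_0[OF m', of "j - i" w]) (use assms w in auto)
qed

lemma is_ucycle_periodic:
  assumes "is_ucycle C"
  obtains n and f :: "nat \<Rightarrow> 'a" where "3 \<le> n" "\<And>i j. f i = f j \<longleftrightarrow> i mod n = j mod n"
    "\<And>i. {f i, f (Suc i)} \<in> C"
proof -
  obtain cs where cs: "distinct cs" "3 \<le> length cs" "C = cycle_edges cs"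
    using assms unfolding is_ucycle_iff_cycle_edges by blast
  define n where "n = length cs"
  define f where "f i = cs ! (i mod n)" for i
  have "f i = f j \<longleftrightarrow> i mod n = j mod n" for i j
  proof -
    have "0 < length cs" using cs(2) by linarith
    then have "i mod n < length cs" "j mod n < length cs" unfolding n_def by simp_all
    then show ?thesis unfolding f_def using nth_eq_iff_index_eq[OF cs(1)] by blast
  qed
  moreover have "{f i, f (Suc i)} \<in> C" for i
  proof -
    have "0 < length cs" using cs(2) by linarith
    then have "cs \<noteq> []" "i mod n < length cs" unfolding n_def by auto
    then have "{cs ! (i mod n), cs ! (Suc (i mod n) mod n)} \<in> C"
      unfolding cs(3) cycle_edges_conv_nth[OF \<open>cs \<noteq> []\<close>] n_def by blast
    then show ?thesis unfolding f_def by (simp add: mod_Suc_eq)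
  qed
  ultimately show thesis using that cs(2) unfolding n_def by blast
qed

lemma aux_graph_edge_isl: "{x, y} \<in> aux_graph Ps \<Longrightarrow> isl x \<noteq> isl y"
  unfolding aux_graph_def by (auto simp: doubleton_eq_iff)

lemma aux_graph_edge_part: "e \<in> aux_graph Ps \<Longrightarrow> e = {Inl G, Inr w} \<Longrightarrow> G \<in> Ps \<and> w \<in> verts G"
  unfolding aux_graph_def by (auto simp: doubleton_eq_iff)

lemma aux_graph_cycle_alternating:
  assumes "C \<subseteq> aux_graph Ps" "is_ucycle C"
  obtains k h where "2 \<le> k" "\<And>i j. h i = h j \<longleftrightarrow> i mod (2 * k) = j mod (2 * k)"
    "\<And>i. {h i, h (Suc i)} \<in> aux_graph Ps" "\<And>i. isl (h i) \<longleftrightarrow> odd i"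
proof -
  obtain n and f :: "nat \<Rightarrow> ('a, 'b) cgraph + 'a" where f: "3 \<le> n"
    "\<And>i j. f i = f j \<longleftrightarrow> i mod n = j mod n" "\<And>i. {f i, f (Suc i)} \<in> C"
    using is_ucycle_periodic[OF assms(2)] by metis
  \<comment> \<open>start the enumeration at a shared vertex\<close>
  define h where "h = (if isl (f 0) then (\<lambda>i. f (Suc i)) else f)"
  have h_eq: "h i = h j \<longleftrightarrow> i mod n = j mod n" for i j
    unfolding h_def using f(2)[of i j] f(2)[of "Suc i" "Suc j"] by (simp add: mod_Suc)
  have h_edge: "{h i, h (Suc i)} \<in> aux_graph Ps" for i
    unfolding h_def using f(3)[of i] f(3)[of "Suc i"] assms(1) by auto
  have "isl (f 0) \<noteq> isl (f (Suc 0))" using aux_graph_edge_isl f(3)[of 0] assms(1) by blast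
  then have "\<not> isl (h 0)" unfolding h_def by simp
  then have h_isl: "isl (h i) \<longleftrightarrow> odd i" for i
  proof (induction i)
    case (Suc i)
    then show ?case using aux_graph_edge_isl[OF h_edge[of i]] by simp
  qed simp
  have "even n" using h_isl[of n] h_isl[of 0] h_eq[of n 0] by simp
  then have n: "2 * (n div 2) = n" "2 \<le> n div 2" using f(1) by auto
  show thesis by (rule that[of "n div 2" h]) (simp_all only: n h_eq h_edge h_isl)
qed

lemma aux_graph_cycle_part_cycle:
  assumes "C \<subseteq> aux_graph Ps" "is_ucycle C"
  obtains k g v where "part_cycle Ps k g v"
proof -
  obtain k h where k: "2 \<le> k" and h_eq: "\<And>i j. h i = h j \<longleftrightarrow> i mod (2 * k) = j mod (2 * k)"
    and h_edge: "\<And>i. {h i, h (Suc i)} \<in> aux_graph Ps" and h_isl: "\<And>i. isl (h i) \<longleftrightarrow> odd i"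
    by (rule aux_graph_cycle_alternating[OF assms]) blast
  define g where "g i = projl (h (2 * i + 1))" for i
  define v where "v i = projr (h (2 * i))" for i
  have hg: "h (2 * i + 1) = Inl (g i)" and hv: "h (2 * i) = Inr (v i)" for i
    unfolding g_def v_def using h_isl[of "2 * i + 1"] h_isl[of "2 * i"] by (simp_all add: sum.collapse)
  have h_inj: "a = b" if "a < 2 * k" "b < 2 * k" "h a = h b" for a b
    using that h_eq[of a b] by simp
  have "inj_on g {..<k}"
  proof (rule inj_onI)
    fix i j assume "i \<in> {..<k}" "j \<in> {..<k}" "g i = g j"
    then show "i = j" using h_inj[of "2 * i + 1" "2 * j + 1"] hg by simp
  qed
  moreover have "inj_on v {..<k}"
  proof (rule inj_onI)
    fix i j assume "i \<in> {..<k}" "j \<in> {..<k}" "v i = v j"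
    then show "i = j" using h_inj[of "2 * i" "2 * j"] hv by simp
  qed
  moreover have "g i \<in> Ps \<and> v i \<in> verts (g i) \<and> v (Suc i mod k) \<in> verts (g i)" for i
  proof -
    have "2 * (Suc i mod k) = (2 * Suc i) mod (2 * k)" by (rule mult_mod_right)
    then have "Suc (2 * i + 1) mod (2 * k) = 2 * (Suc i mod k) mod (2 * k)" by simp
    then have "h (Suc (2 * i + 1)) = h (2 * (Suc i mod k))" by (rule h_eq[THEN iffD2])
    then have "h (Suc (2 * i + 1)) = Inr (v (Suc i mod k))" by (simp only: hv)
    moreover have "{h (2 * i + 1), h (Suc (2 * i + 1))} \<in> aux_graph Ps" by (rule h_edge)
    ultimately have "{Inl (g i), Inr (v (Suc i mod k))} \<in> aux_graph Ps" by (simp only: hg)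
    moreover have "{h (2 * i), h (Suc (2 * i))} \<in> aux_graph Ps" by (rule h_edge)
    then have "{Inr (v i), Inl (g i)} \<in> aux_graph Ps" by (simp only: hv hg[symmetric] Suc_eq_plus1)
    moreover have "{Inr (v i), Inl (g i)} = {Inl (g i), Inr (v i)}" by blast
    ultimately show ?thesis using aux_graph_edge_part by metis
  qed
  ultimately have "part_cycle Ps k g v" unfolding part_cycle_def using k by simp
  then show thesis by (rule that)
qed

section \<open>Frankenstein graphs\<close>

locale frankenstein_partition =
  fixes F :: "('v, 'c) cgraph" and Ps :: "('v, 'c) cgraph set"
  assumes frankenstein: "frankenstein F Ps"
begin

lemma cgraph_F: "cgraph F"
  and partition: "is_partition F Ps"
  and part_cases: "G \<in> Ps \<Longrightarrow> long_rainbow_odd_cycle G \<or> bad_piece G \<or> rainbow_tree G"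
  and tree_parts_disjoint: "G \<in> Ps \<Longrightarrow> H \<in> Ps \<Longrightarrow> G \<noteq> H \<Longrightarrow> rainbow_tree G
    \<Longrightarrow> rainbow_tree H \<Longrightarrow> verts G \<inter> verts H = {}"
  and no_rainbow_even_cycle: "\<not> (\<exists>C \<subseteq> F. ccycle C \<and> rainbow C \<and> even (card C))"
  using frankenstein unfolding frankenstein_def by simp_all

lemma part_subset: "G \<in> Ps \<Longrightarrow> G \<subseteq> F"
  and part_cgraph: "G \<in> Ps \<Longrightarrow> cgraph G"
  and card_verts_Int_parts: "G \<in> Ps \<Longrightarrow> H \<in> Ps \<Longrightarrow> G \<noteq> H \<Longrightarrow>
    card (verts G \<inter> verts H) \<le> 1"
  and colors_parts_disjoint: "G \<in> Ps \<Longrightarrow> H \<in> Ps \<Longrightarrow> G \<noteq> H \<Longrightarrow>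
    colors G \<inter> colors H = {}"
  using partition unfolding is_partition_def by auto

lemma parts_share_one_vertex:
  assumes "G \<in> Ps" "H \<in> Ps" "G \<noteq> H" "a \<in> verts G \<inter> verts H" "b \<in> verts G \<inter> verts H"
  shows "a = b"
proof -
  have "card (verts G \<inter> verts H) \<le> 1" using card_verts_Int_parts assms(1-3) .
  moreover have "finite (verts G \<inter> verts H)" using finite_verts part_cgraph assms(1) by blast
  ultimately show ?thesis using assms(4,5) by (auto simp: card_le_Suc0_iff_eq)
qed

lemma edge_restrict_part:
  assumes "G \<in> Ps" "E \<subseteq> fst ` G"
  shows "edge_restrict F E = edge_restrict G E"
proof -
  have "q \<in> G" if q: "q \<in> F" "fst q \<in> E" for q
  proof -
    obtain q' where "q' \<in> G" "fst q' = fst q" using q(2) assms(2) by force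
    moreover have "q' \<in> F" using \<open>q' \<in> G\<close> part_subset[OF assms(1)] by blast
    ultimately show ?thesis using inj_onD[OF inj_on_fst_cgraph[OF cgraph_F]] q(1) by metis
  qed
  then show ?thesis using part_subset[OF assms(1)] unfolding edge_restrict_def by blast
qed

lemma rainbow_on_F_iff_part:
  assumes "G \<in> Ps" "E \<subseteq> fst ` G"
  shows "rainbow_on F E \<longleftrightarrow> rainbow_on G E"
proof -
  have "E \<subseteq> fst ` F" using assms part_subset by blast
  then show ?thesis using assms(2) edge_restrict_part[OF assms] unfolding rainbow_on_def by simp
qed

lemma rainbow_cycle_odd:
  assumes "distinct cs" "3 \<le> length cs" "rainbow_on F (cycle_edges cs)"
  shows "odd (length cs)"
proof
  assume even: "even (length cs)"
  define C where "C = edge_restrict F (cycle_edges cs)"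
  have "C \<subseteq> F" unfolding C_def edge_restrict_def by blast
  then have "cgraph C" using cgraph_subset[OF cgraph_F] by blast
  have fst_C: "fst ` C = cycle_edges cs"
    using assms(3) unfolding C_def rainbow_on_def edge_restrict_def by force
  have "ccycle C"
    unfolding ccycle_def is_ucycle_iff_cycle_edges using \<open>cgraph C\<close> fst_C assms(1,2) by blast
  moreover have "rainbow C" using assms(3) \<open>cgraph C\<close>
    unfolding C_def rainbow_on_def by (simp add: cgraph_def rainbow_iff_inj_on)
  moreover have "card C = length cs"
    using card_image[OF inj_on_fst_cgraph[OF \<open>cgraph C\<close>]] fst_C card_cycle_edges[OF assms(1,2)]
    by simp
  ultimately show False using no_rainbow_even_cycle \<open>C \<subseteq> F\<close> even by auto
qed

text \<open>The only repeated colour sits on e \<in> qa and e' \<in> qb, so the cycles qa + qc and qb + qc are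
  rainbow, hence odd.\<close>
lemma theta_part_path_parity:
  assumes G: "G \<in> Ps" and th: "theta_lists qa qb qc s t"
    and FG: "fst ` G = upath_edges qa \<union> upath_edges qb \<union> upath_edges qc"
    and e: "fst e \<in> upath_edges qa" "inj_on snd (G - {e})"
    and e': "fst e' \<in> upath_edges qb" "inj_on snd (G - {e'})"
    and xy: "x \<in> verts G" "y \<in> verts G" "x \<noteq> y"
  shows "\<exists>p. rainbow_path_in G x y p \<and> even (length p) = b"
proof -
  note th' = theta_listsD[OF th]
  have odd_cycle: "odd (length q + length qc)"
    if q: "list_path q s t" "set q \<inter> set qc \<subseteq> {s, t}" "upath_edges q \<inter> upath_edges qc = {}"
      "upath_edges q \<subseteq> fst ` G" "fst f \<notin> upath_edges q \<union> upath_edges qc" "inj_on snd (G - {f})"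
    for q f
  proof -
    obtain cs where cs: "distinct cs" "3 \<le> length cs" "length cs + 2 = length q + length qc"
      "cycle_edges cs = upath_edges q \<union> upath_edges qc"
      using two_paths_cycle[OF q(1) th'(3) q(2,3)] by metis
    have "cycle_edges cs \<subseteq> fst ` G" using cs(4) q(4) FG by blast
    then have "rainbow_on F (cycle_edges cs)"
      using rainbow_on_F_iff_part[OF G] rainbow_on_if_inj_on_Diff q(5,6) cs(4) by metis
    then have "odd (length cs)" using rainbow_cycle_odd cs(1,2) by blast
    then show ?thesis using cs(3) by presburger
  qed
  have "odd (length qa + length qc)"
    using odd_cycle[OF th'(1,5,8) _ _ e'(2)] e'(1) th'(7,9) FG by blast
  moreover have "odd (length qb + length qc)"
    using odd_cycle[OF th'(2,6,9) _ _ e(2)] e(1) th'(7,8) FG by blast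
  moreover have "verts G = set qa \<union> set qb \<union> set qc"
    using FG th'(1-3) Union_upath_edges_list_path unfolding verts_def by (metis Union_Un_distrib)
  ultimately obtain p where p: "list_path p x y"
    "upath_edges p \<subseteq> upath_edges qa \<union> upath_edges qb \<union> upath_edges qc"
    "fst e \<notin> upath_edges p \<or> fst e' \<notin> upath_edges p" "even (length p) = b"
    using theta_path_parity[OF th _ _ e(1) e'(1), of x y b] xy by blast
  then have "rainbow_on G (upath_edges p)"
    using FG rainbow_on_if_inj_on_Diff e(2) e'(2) by metis
  then show ?thesis using p(1,4) unfolding rainbow_path_in_def by blast
qed

lemma bad_piece_path_parity:
  assumes G: "G \<in> Ps" "bad_piece G" and xy: "x \<in> verts G" "y \<in> verts G" "x \<noteq> y"
  shows "\<exists>p. rainbow_path_in G x y p \<and> even (length p) = b"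
proof -
  obtain q1 q2 q3 s t where th: "theta_lists q1 q2 q3 s t"
    and FG: "fst ` G = upath_edges q1 \<union> upath_edges q2 \<union> upath_edges q3"
    and rb: "rainbow_on G (upath_edges q1)" "rainbow_on G (upath_edges q2)"
      "rainbow_on G (upath_edges q3)"
    by (rule bad_piece_theta_lists[OF G(2)])
  have "finite G" "almost_rainbow G"
    using part_cgraph[OF G(1)] G(2) unfolding cgraph_def bad_piece_def by simp_all
  then obtain e e' where e: "e \<in> G" "e' \<in> G" "e \<noteq> e'" "snd e = snd e'"
    "inj_on snd (G - {e})" "inj_on snd (G - {e'})"
    by (rule almost_rainbow_repeated_color)
  have apart: "\<not> (fst e \<in> E \<and> fst e' \<in> E)" if "rainbow_on G E" for E
    using that e(1-4) unfolding rainbow_on_def edge_restrict_def inj_on_def by blast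
  have pair: ?thesis
    if th: "theta_lists qa qb qc s t"
      and FG: "fst ` G = upath_edges qa \<union> upath_edges qb \<union> upath_edges qc"
      and ee': "fst e \<in> upath_edges qa \<and> fst e' \<in> upath_edges qb
        \<or> fst e' \<in> upath_edges qa \<and> fst e \<in> upath_edges qb"
    for qa qb qc
    using ee' theta_part_path_parity[OF G(1) th FG _ e(5) _ e(6) xy]
      theta_part_path_parity[OF G(1) th FG _ e(6) _ e(5) xy] by blast
  have "fst e \<in> fst ` G" "fst e' \<in> fst ` G" using e(1,2) by simp_all
  then have "fst e \<in> upath_edges q1 \<and> fst e' \<in> upath_edges q2 \<or> fst e' \<in> upath_edges q1 \<and> fst e \<in> upath_edges q2
    \<or> fst e \<in> upath_edges q1 \<and> fst e' \<in> upath_edges q3 \<or> fst e' \<in> upath_edges q1 \<and> fst e \<in> upath_edges q3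
    \<or> fst e \<in> upath_edges q2 \<and> fst e' \<in> upath_edges q3 \<or> fst e' \<in> upath_edges q2 \<and> fst e \<in> upath_edges q3"
    using FG apart[OF rb(1)] apart[OF rb(2)] apart[OF rb(3)] by blast
  moreover have "fst ` G = upath_edges q1 \<union> upath_edges q3 \<union> upath_edges q2"
    "fst ` G = upath_edges q2 \<union> upath_edges q3 \<union> upath_edges q1"
    using FG by blast+
  ultimately show ?thesis
    using pair[OF th FG] pair[OF theta_lists_swap_23[OF th]]
      pair[OF theta_lists_swap_23[OF theta_lists_swap_12[OF th]]]
    by blast
qed

lemma nontree_part_path_parity:
  assumes "G \<in> Ps" "\<not> rainbow_tree G" "x \<in> verts G" "y \<in> verts G" "x \<noteq> y"
  shows "\<exists>p. rainbow_path_in G x y p \<and> even (length p) = b"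
proof -
  consider "long_rainbow_odd_cycle G" | "bad_piece G" using part_cases[OF assms(1)] assms(2) by blast
  then show ?thesis
  proof cases
    case 1
    show ?thesis by (rule rainbow_odd_cycle_path_parity[OF 1 assms(3-5)])
  next
    case 2
    show ?thesis by (rule bad_piece_path_parity[OF assms(1) 2 assms(3-5)])
  qed
qed

lemma part_path:
  assumes "G \<in> Ps" "x \<in> verts G" "y \<in> verts G" "x \<noteq> y"
  shows "\<exists>p. rainbow_path_in G x y p"
proof (cases "rainbow_tree G")
  case True
  show ?thesis by (rule rainbow_tree_path[OF True assms(2-4)])
next
  case False
  then obtain p where "rainbow_path_in G x y p"
    using nontree_part_path_parity[OF assms(1) False assms(2-4)] by blast
  then show ?thesis ..
qed

lemma part_cycle_length_ge_3:
  assumes "part_cycle Ps k g v"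
  shows "3 \<le> k"
proof (rule ccontr)
  assume "\<not> 3 \<le> k"
  note pc = part_cycleD[OF assms]
  have k: "k = 2" using pc(1) \<open>\<not> 3 \<le> k\<close> by simp
  have "g 0 \<noteq> g 1" "v 0 \<noteq> v 1" using inj_onD[OF pc(2), of 0 1] inj_onD[OF pc(3), of 0 1] k by auto
  moreover have "v 0 \<in> verts (g 0) \<inter> verts (g 1)" "v 1 \<in> verts (g 0) \<inter> verts (g 1)"
    using pc(5,6)[of 0] pc(5,6)[of 1] k by simp_all
  ultimately show False using parts_share_one_vertex pc(4)[of 0] pc(4)[of 1] k by simp
qed

text \<open>One of any two consecutive parts is not a tree, and choosing the parity of the path
  through it makes the total length even.\<close>
lemma part_cycle_even_paths:
  assumes "part_cycle Ps k g v"
  obtains p where "\<And>i. i < k \<Longrightarrow> rainbow_path_in (g i) (v i) (v (Suc i mod k)) (p i)"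
    "even (\<Sum>i<k. length (p i) - 1)"
proof -
  note pc = part_cycleD[OF assms]
  have ends: "v i \<in> verts (g i)" "v (Suc i mod k) \<in> verts (g i)" "v i \<noteq> v (Suc i mod k)"
    if "i < k" for i
    using that pc(1,5,6) inj_onD[OF pc(3), of i "Suc i mod k"] by (auto simp: mod_Suc)
  obtain i0 where i0: "i0 < k" "\<not> rainbow_tree (g i0)"
  proof -
    have "v 1 \<in> verts (g 0) \<inter> verts (g 1)" "g 0 \<noteq> g 1"
      using pc(1) pc(6)[of 0] pc(5)[of 1] inj_onD[OF pc(2), of 0 1] by auto
    then show thesis using that tree_parts_disjoint[OF pc(4)[of 0] pc(4)[of 1]] pc(1) by fastforce
  qed
  define p0 where "p0 i = (SOME p. rainbow_path_in (g i) (v i) (v (Suc i mod k)) p)" for i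
  have p0: "rainbow_path_in (g i) (v i) (v (Suc i mod k)) (p0 i)" if "i < k" for i
    unfolding p0_def using part_path[OF pc(4)[OF that] ends[OF that]] by (rule someI_ex)
  define T where "T = (\<Sum>i\<in>{..<k} - {i0}. length (p0 i) - 1)"
  obtain q where q: "rainbow_path_in (g i0) (v i0) (v (Suc i0 mod k)) q" "even (length q) = odd T"
    using nontree_part_path_parity[OF pc(4) i0(2) ends] i0(1) by blast
  define p where "p = p0(i0 := q)"
  have "(\<Sum>i<k. length (p i) - 1) = (length q - 1) + T"
    unfolding T_def p_def using i0(1) by (simp add: sum.remove)
  moreover have "2 \<le> length q" using q(1) unfolding rainbow_path_in_def list_path_def by simp
  ultimately have "even (\<Sum>i<k. length (p i) - 1)" using q(2) by presburger
  moreover have "rainbow_path_in (g i) (v i) (v (Suc i mod k)) (p i)" if "i < k" for i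
    using p0[OF that] q(1) unfolding p_def by (cases "i = i0") simp_all
  ultimately show thesis using that by blast
qed

lemma rainbow_on_UN_parts:
  assumes g: "inj_on g I" "\<And>i. i \<in> I \<Longrightarrow> g i \<in> Ps"
    and E: "\<And>i. i \<in> I \<Longrightarrow> rainbow_on (g i) (E i)"
  shows "rainbow_on F (\<Union>i\<in>I. E i)"
proof -
  have sub: "E i \<subseteq> fst ` g i" if "i \<in> I" for i using E[OF that] unfolding rainbow_on_def by blast
  then have "(\<Union>i\<in>I. E i) \<subseteq> fst ` F" using part_subset g(2) by blast
  moreover have "inj_on snd (edge_restrict F (\<Union>i\<in>I. E i))"
  proof (rule inj_onI)
    fix a b assume ab: "a \<in> edge_restrict F (\<Union>i\<in>I. E i)" "b \<in> edge_restrict F (\<Union>i\<in>I. E i)"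
      "snd a = snd b"
    then obtain i j where ij: "i \<in> I" "j \<in> I" "a \<in> edge_restrict F (E i)" "b \<in> edge_restrict F (E j)"
      unfolding edge_restrict_def by blast
    then have a: "a \<in> edge_restrict (g i) (E i)" and b: "b \<in> edge_restrict (g j) (E j)"
      using edge_restrict_part[OF g(2) sub] by blast+
    show "a = b"
    proof (cases "g i = g j")
      case True
      then have "i = j" using inj_onD[OF g(1)] ij(1,2) by blast
      then show ?thesis using a b ab(3) E[OF ij(1)] unfolding rainbow_on_def inj_on_def by blast
    next
      case False
      then have "colors (g i) \<inter> colors (g j) = {}" using colors_parts_disjoint g(2) ij(1,2) by blast
      moreover have "snd a \<in> colors (g i)" "snd b \<in> colors (g j)"
        using a b unfolding edge_restrict_def colors_def by auto
      ultimately show ?thesis using ab(3) by auto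
    qed
  qed
  ultimately show ?thesis unfolding rainbow_on_def by blast
qed

lemma no_minimal_part_cycle:
  assumes m: "minimal_part_cycle Ps k g v"
  shows False
proof -
  have pc: "part_cycle Ps k g v" using m unfolding minimal_part_cycle_def by blast
  note pc' = part_cycleD[OF pc]
  have k: "3 \<le> k" by (rule part_cycle_length_ge_3[OF pc])
  obtain p where p: "\<And>i. i < k \<Longrightarrow> rainbow_path_in (g i) (v i) (v (Suc i mod k)) (p i)"
    and even: "even (\<Sum>i<k. length (p i) - 1)"
    by (rule part_cycle_even_paths[OF pc]) blast
  have sub: "set (p i) \<subseteq> verts (g i)" if "i < k" for i
    using set_subset_verts_if_rainbow_path[OF p[OF that]] .
  have meet: "set (p i) \<inter> set (p j) \<subseteq> {u}" if "i < k" "j < k" "i \<noteq> j"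
    "u \<in> verts (g i)" "u \<in> verts (g j)" for i j u
    using that sub[of i] sub[of j] parts_share_one_vertex[OF pc'(4)[of i] pc'(4)[of j]]
      inj_onD[OF pc'(2), of i j] by blast
  obtain cs where cs: "distinct cs" "length cs = (\<Sum>i<k. length (p i) - 1)"
    "cycle_edges cs = (\<Union>i<k. upath_edges (p i))"
  proof (rule path_ring_cycle[OF k pc'(3)])
    show "list_path (p i) (v i) (v (Suc i mod k))" if "i < k" for i
      using p[OF that] unfolding rainbow_path_in_def by blast
    show "set (p i) \<inter> set (p (Suc i)) \<subseteq> {v (Suc i)}" if "Suc i < k" for i
      using meet[of i "Suc i"] pc'(5,6)[of i] pc'(5)[of "Suc i"] that by simp
    show "set (p 0) \<inter> set (p (k - 1)) \<subseteq> {v 0}"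
      using meet[of 0 "k - 1"] pc'(5)[of 0] pc'(6)[of "k - 1"] k by simp
    show "set (p i) \<inter> set (p j) = {}" if "Suc i < j" "j < k" "\<not> (i = 0 \<and> j = k - 1)" for i j
      using minimal_part_cycle_no_chord[OF m, of i j] sub[of i] sub[of j] that by auto
  qed
  have "rainbow_on F (cycle_edges cs)"
    unfolding cs(3) using p pc'(2,4) by (intro rainbow_on_UN_parts) (auto simp: rainbow_path_in_def)
  moreover have "k \<le> length cs"
  proof -
    have "2 \<le> length (p i)" if "i < k" for i
      using p[OF that] unfolding rainbow_path_in_def list_path_def by simp
    then have "(\<Sum>i<k. 1) \<le> (\<Sum>i<k. length (p i) - 1)" by (intro sum_mono) fastforce
    then show ?thesis using cs(2) by simp
  qed
  ultimately have "odd (length cs)" using rainbow_cycle_odd cs(1) k by simp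
  then show False using even cs(2) by simp
qed

lemma uforest_aux_graph: "uforest (aux_graph Ps)"
  unfolding uforest_def
proof
  assume "\<exists>C \<subseteq> aux_graph Ps. is_ucycle C"
  then obtain C where "C \<subseteq> aux_graph Ps" "is_ucycle C" by blast
  then obtain k g v where "part_cycle Ps k g v" by (rule aux_graph_cycle_part_cycle)
  then obtain k' g' v' where "minimal_part_cycle Ps k' g' v'" by (rule exists_minimal_part_cycle)
  then show False by (rule no_minimal_part_cycle)
qed

end

theorem lemma2p6:
  fixes F :: "('v, 'c) cgraph" and Ps :: "('v, 'c) cgraph set"
  assumes "frankenstein F Ps"
  shows "uforest (aux_graph Ps)"
proof -
  interpret frankenstein_partition F Ps by (rule frankenstein_partition.intro[OF assms])
  show ?thesis by (rule uforest_aux_graph)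
qed

end
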